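(* Let $F\subset\mathbb{R}$ be closed and define $f\colon[0,\infty)\to[-\infty,0]$ by $f(\gamma)=-\inf_{a\in F}\ell(\gamma;a)$. If $F\subset(-\infty,0)$, then $f\equiv-\infty$. If $F\cap[0,\infty)\neq\emptyset$, then $f$ is real-valued and continuous on $(0,\infty)$, and $\lim_{\gamma\downarrow0}f(\gamma)=f(0)$, where $f(0)=0$ if $0\in F$ and $f(0)=-\infty$ if $0\notin F$. In any case, $f^{-1}([a,b])$ is closed for all $a,b\in(-\infty,0]$ with $a\le b$.
   Context: For $\gamma\ge0$: $\ell(\gamma;a)=\infty$ for $a<0$, $\ell(\gamma;0)=\gamma$, and $\ell(\gamma;a)=\gamma-a+a\log(a/\gamma)$ for $a>0$ (interpreted as $\infty$ when $\gamma=0$). *)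

theory Defs
  imports "HOL-Analysis.Analysis"
begin

definition ell :: "real \<Rightarrow> real \<Rightarrow> ereal" where
  "ell \<gamma> a = (if a < 0 then \<infinity>
               else if a = 0 then ereal \<gamma>
               else if \<gamma> = 0 then \<infinity>
               else ereal (\<gamma> - a + a * ln (a / \<gamma>)))"

definition fF :: "real set \<Rightarrow> real \<Rightarrow> ereal" where
  "fF F \<gamma> = - (INF a\<in>F. ell \<gamma> a)"

end

theory Submission
  imports Defs "HOL-Real_Asymp.Real_Asymp"
begin

text \<open>For \<open>\<gamma> > 0\<close> and \<open>a \<ge> 0\<close>, substituting \<open>u = ln \<gamma>\<close> gives
  \<open>\<ell>(\<gamma>;a) = \<gamma> + (a ln a - a - a u)\<close>, which is affine in \<open>u\<close> for fixed \<open>a\<close>. Hence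
  \<open>-f(e\<^sup>u) - e\<^sup>u\<close> is an infimum of affine functions of \<open>u\<close>; it is bounded below by
  \<open>-e\<^sup>u\<close> (Gibbs' inequality), so it is a finite concave, hence continuous, function, and \<open>f\<close>
  is continuous on \<open>(0,\<infinity>)\<close>. At \<open>\<gamma> = 0\<close>: if \<open>0 \<in> F\<close> then \<open>-\<gamma> \<le> f(\<gamma>) \<le> 0\<close>; otherwise
  closedness gives \<open>F \<inter> [0,\<infinity>) \<subseteq> [\<delta>,\<infinity>)\<close> for some \<open>\<delta> > 0\<close>; for \<open>\<gamma> < \<delta>\<close> the
  terms with \<open>a \<ge> \<delta>\<close> are smallest at \<open>a = \<delta>\<close>, so \<open>f(\<gamma>) \<le> \<delta> - \<delta> ln \<delta> + \<delta> ln \<gamma> \<rightarrow> -\<infinity>\<close>.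
  So \<open>f\<close> is continuous on \<open>[0,\<infinity>)\<close> into the extended reals, and the level sets \<open>f\<^sup>-\<^sup>1([a,b])\<close> are closed.\<close>

definition ell_affine :: "real \<Rightarrow> real \<Rightarrow> real" where
  "ell_affine u a = a * ln a - a - a * u"

definition ell_env :: "real set \<Rightarrow> real \<Rightarrow> real" where
  "ell_env G u = (INF a\<in>G. ell_affine u a)"

lemma mult_ln_diff_ge:
  fixes a b :: real
  assumes "a \<ge> 0" "b > 0"
  shows "a - b \<le> a * (ln a - ln b)"
proof (cases "a = 0")
  case False
  with assms have a: "a > 0" by simp
  have "ln b - ln a \<le> b / a - 1"
    using ln_le_minus_one[of "b / a"] a assms by (simp add: ln_div)
  hence "a * (ln b - ln a) \<le> a * (b / a - 1)" using a by (simp add: mult_left_mono)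
  also have "\<dots> = b - a" using a by (simp add: field_simps)
  finally show ?thesis by (simp add: algebra_simps)
qed (use assms in simp)

lemma ell_eq_ell_affine:
  assumes "\<gamma> > 0" "a \<ge> 0"
  shows "ell \<gamma> a = ereal (\<gamma> + ell_affine (ln \<gamma>) a)"
  using assms by (auto simp: ell_def ell_affine_def ln_div algebra_simps)

lemma ell_affine_ge_neg_exp: "a \<ge> 0 \<Longrightarrow> - exp u \<le> ell_affine u a"
  using mult_ln_diff_ge[of a "exp u"] by (simp add: ell_affine_def algebra_simps)

lemma ell_affine_mono:
  assumes "0 < \<delta>" "\<delta> \<le> a" "u \<le> ln \<delta>"
  shows "ell_affine u \<delta> \<le> ell_affine u a"
proof -
  have "a - \<delta> \<le> a * (ln a - ln \<delta>)" using mult_ln_diff_ge[of a \<delta>] assms by simp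
  moreover have "\<delta> * (ln \<delta> - u) \<le> a * (ln \<delta> - u)" using assms by (simp add: mult_right_mono)
  ultimately show ?thesis by (simp add: ell_affine_def algebra_simps)
qed

lemma ell_env_le:
  assumes "G \<subseteq> {0..}" "a \<in> G"
  shows "ell_env G u \<le> ell_affine u a"
proof -
  have "bdd_below (ell_affine u ` G)"
    using assms(1) ell_affine_ge_neg_exp by (auto simp: bdd_below_def)
  thus ?thesis unfolding ell_env_def using assms(2) by (rule cINF_lower)
qed

lemma ell_env_ge_neg_exp:
  assumes "G \<subseteq> {0..}" "G \<noteq> {}"
  shows "- exp u \<le> ell_env G u"
  unfolding ell_env_def using assms ell_affine_ge_neg_exp by (auto intro!: cINF_greatest)

lemma concave_ell_env:
  assumes "G \<subseteq> {0..}" "G \<noteq> {}"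
  shows "convex_on UNIV (\<lambda>u. - ell_env G u)"
proof (rule convex_onI)
  fix t x y :: real
  assume t: "0 < t" "t < 1"
  have "(1 - t) * ell_env G x + t * ell_env G y \<le> ell_env G ((1 - t) * x + t * y)"
    unfolding ell_env_def[of G "(1 - t) * x + t * y"]
  proof (rule cINF_greatest[OF assms(2)])
    fix a assume a: "a \<in> G"
    have "(1 - t) * ell_env G x \<le> (1 - t) * ell_affine x a"
      using ell_env_le[OF assms(1) a] t by (simp add: mult_left_mono)
    moreover have "t * ell_env G y \<le> t * ell_affine y a"
      using ell_env_le[OF assms(1) a] t by (simp add: mult_left_mono)
    moreover have "ell_affine ((1 - t) * x + t * y) a = (1 - t) * ell_affine x a + t * ell_affine y a"
      by (simp add: ell_affine_def algebra_simps)
    ultimately show "(1 - t) * ell_env G x + t * ell_env G y \<le> ell_affine ((1 - t) * x + t * y) a"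
      by linarith
  qed
  thus "- ell_env G ((1 - t) *\<^sub>R x + t *\<^sub>R y) \<le> (1 - t) * - ell_env G x + t * - ell_env G y"
    by simp
qed simp

lemma continuous_on_ell_env:
  assumes "G \<subseteq> {0..}" "G \<noteq> {}"
  shows "continuous_on UNIV (ell_env G)"
  using continuous_on_minus[OF convex_on_continuous[OF open_UNIV concave_ell_env[OF assms]]]
  by simp

lemma fF_eq_MInfty:
  assumes "F \<inter> {0..} = {}"
  shows "fF F \<gamma> = -\<infinity>"
proof -
  have "(INF a\<in>F. ell \<gamma> a) = \<infinity>"
    using assms by (intro INF_eqI) (auto simp: ell_def)
  thus ?thesis by (simp add: fF_def)
qed

lemma fF_eq_ell_env:
  assumes "F \<inter> {0..} \<noteq> {}" "\<gamma> > 0"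
  shows "fF F \<gamma> = ereal (- (\<gamma> + ell_env (F \<inter> {0..}) (ln \<gamma>)))"
proof -
  let ?G = "F \<inter> {0..}"
  have "(INF a\<in>F. ell \<gamma> a) = ereal (\<gamma> + ell_env ?G (ln \<gamma>))"
  proof (rule INF_eqI)
    fix a assume "a \<in> F"
    thus "ereal (\<gamma> + ell_env ?G (ln \<gamma>)) \<le> ell \<gamma> a"
      using ell_env_le[of ?G a] ell_eq_ell_affine[OF assms(2), of a]
      by (cases "a < 0") (auto simp: ell_def)
  next
    fix y assume y: "\<And>a. a \<in> F \<Longrightarrow> y \<le> ell \<gamma> a"
    have y_le: "y \<le> ereal (\<gamma> + ell_affine (ln \<gamma>) a)" if "a \<in> ?G" for a
      using y[of a] that ell_eq_ell_affine[OF assms(2), of a] by simp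
    show "y \<le> ereal (\<gamma> + ell_env ?G (ln \<gamma>))"
    proof (cases y)
      case (real r)
      have "r - \<gamma> \<le> ell_env ?G (ln \<gamma>)" unfolding ell_env_def
        using y_le real by (intro cINF_greatest[OF assms(1)]) (simp add: algebra_simps)
      thus ?thesis using real by simp
    next
      case PInf
      thus ?thesis using y_le assms(1) by auto
    qed simp
  qed
  thus ?thesis by (simp add: fF_def)
qed

lemma fF_at_0: "fF F 0 = (if 0 \<in> F then 0 else -\<infinity>)"
proof (cases "0 \<in> F")
  case True
  have "(INF a\<in>F. ell 0 a) = 0"
  proof (rule INF_eqI)
    fix y assume "\<And>a. a \<in> F \<Longrightarrow> y \<le> ell 0 a"
    from this[OF True] show "y \<le> 0" by (simp add: ell_def zero_ereal_def)
  qed (auto simp: ell_def)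
  thus ?thesis using True by (simp add: fF_def)
next
  case False
  have "(INF a\<in>F. ell 0 a) = \<infinity>"
    using False by (intro INF_eqI) (auto simp: ell_def)
  thus ?thesis using False by (simp add: fF_def)
qed

lemma continuous_on_fF_pos:
  assumes "F \<inter> {0..} \<noteq> {}"
  shows "continuous_on {0<..} (fF F)"
proof -
  have "continuous_on {0<..} (\<lambda>\<gamma>. ell_env (F \<inter> {0..}) (ln \<gamma>))"
  proof (rule continuous_on_compose2[of UNIV _ _ ln])
    show "continuous_on UNIV (ell_env (F \<inter> {0..}))"
      using assms by (intro continuous_on_ell_env) auto
    show "continuous_on {0<..} (ln :: real \<Rightarrow> real)"
      by (intro continuous_intros) auto
  qed simp
  hence "continuous_on {0<..} (\<lambda>\<gamma>. ereal (- (\<gamma> + ell_env (F \<inter> {0..}) (ln \<gamma>))))"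
    by (intro continuous_on_ereal continuous_on_minus continuous_on_add continuous_on_id)
  thus ?thesis by (rule continuous_on_eq) (simp add: fF_eq_ell_env[OF assms])
qed

lemma fF_tendsto_0:
  assumes "0 \<in> F"
  shows "(fF F \<longlongrightarrow> 0) (at_right 0)"
proof -
  let ?G = "F \<inter> {0..}"
  define g where "g \<gamma> = - (\<gamma> + ell_env ?G (ln \<gamma>))" for \<gamma>
  have G: "?G \<subseteq> {0..}" "?G \<noteq> {}" "0 \<in> ?G" using assms by auto
  have g_bounds: "- \<gamma> \<le> g \<gamma> \<and> g \<gamma> \<le> 0" if "\<gamma> > 0" for \<gamma>
    using ell_env_le[OF G(1,3), of "ln \<gamma>"] ell_env_ge_neg_exp[OF G(1,2), of "ln \<gamma>"] that
    by (simp add: g_def ell_affine_def)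
  have "(g \<longlongrightarrow> 0) (at_right 0)"
  proof (rule tendsto_sandwich)
    show "eventually (\<lambda>\<gamma>. - \<gamma> \<le> g \<gamma>) (at_right 0)"
      using eventually_at_right_less[of 0] by eventually_elim (use g_bounds in blast)
    show "eventually (\<lambda>\<gamma>. g \<gamma> \<le> 0) (at_right 0)"
      using eventually_at_right_less[of 0] by eventually_elim (use g_bounds in blast)
  qed real_asymp+
  hence "((\<lambda>\<gamma>. ereal (g \<gamma>)) \<longlongrightarrow> 0) (at_right 0)"
    by (simp add: lim_ereal zero_ereal_def)
  moreover have "eventually (\<lambda>\<gamma>. ereal (g \<gamma>) = fF F \<gamma>) (at_right 0)"
    using eventually_at_right_less[of 0]
    by eventually_elim (simp add: g_def fF_eq_ell_env G(2))
  ultimately show ?thesis by (rule Lim_transform_eventually)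
qed

lemma fF_tendsto_MInfty:
  assumes "closed F" "0 \<notin> F"
  shows "(fF F \<longlongrightarrow> -\<infinity>) (at_right 0)"
proof (cases "F \<inter> {0..} = {}")
  case True
  hence "fF F = (\<lambda>_. -\<infinity>)" using fF_eq_MInfty by blast
  thus ?thesis by simp
next
  case False
  let ?G = "F \<inter> {0..}"
  define g where "g \<gamma> = - (\<gamma> + ell_env ?G (ln \<gamma>))" for \<gamma>
  obtain \<delta> where \<delta>: "\<delta> > 0" "ball 0 \<delta> \<subseteq> - F"
    using assms open_contains_ball[of "- F"] by blast
  have G_ge: "\<delta> \<le> a" if "a \<in> ?G" for a
  proof (rule ccontr)
    assume "\<not> \<delta> \<le> a"
    with that have "a \<in> ball 0 \<delta>" by (simp add: dist_real_def)
    with that \<delta>(2) show False by blast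
  qed
  have g_le: "g \<gamma> \<le> - ell_affine (ln \<gamma>) \<delta>" if "0 < \<gamma>" "\<gamma> < \<delta>" for \<gamma>
  proof -
    have "ell_affine (ln \<gamma>) \<delta> \<le> ell_env ?G (ln \<gamma>)" unfolding ell_env_def
    proof (rule cINF_greatest[OF False])
      fix a assume "a \<in> ?G"
      with that \<delta>(1) G_ge show "ell_affine (ln \<gamma>) \<delta> \<le> ell_affine (ln \<gamma>) a"
        by (intro ell_affine_mono) auto
    qed
    thus ?thesis using that by (simp add: g_def)
  qed
  have "filterlim (\<lambda>\<gamma>. - ell_affine (ln \<gamma>) \<delta>) at_bot (at_right 0)"
    unfolding ell_affine_def using \<delta>(1) by real_asymp
  moreover have "eventually (\<lambda>\<gamma>. g \<gamma> \<le> - ell_affine (ln \<gamma>) \<delta>) (at_right 0)"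
    using eventually_at_right_real[OF \<delta>(1)] by eventually_elim (use g_le in auto)
  ultimately have "filterlim g at_bot (at_right 0)"
    by (rule filterlim_at_bot_mono)
  hence "((\<lambda>\<gamma>. ereal (g \<gamma>)) \<longlongrightarrow> -\<infinity>) (at_right 0)"
    using ereal_tendsto_simps2(3)[of g] by (simp add: comp_def)
  moreover have "eventually (\<lambda>\<gamma>. ereal (g \<gamma>) = fF F \<gamma>) (at_right 0)"
    using eventually_at_right_less[of 0]
    by eventually_elim (simp add: g_def fF_eq_ell_env False)
  ultimately show ?thesis by (rule Lim_transform_eventually)
qed

lemma fF_tendsto_fF_0:
  assumes "closed F"
  shows "(fF F \<longlongrightarrow> fF F 0) (at_right 0)"
  using fF_tendsto_0 fF_tendsto_MInfty[OF assms] fF_at_0 by (cases "0 \<in> F") auto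

lemma continuous_on_fF_nonneg:
  assumes "closed F"
  shows "continuous_on {0..} (fF F)"
proof (cases "F \<inter> {0..} = {}")
  case True
  hence "fF F = (\<lambda>_. -\<infinity>)" using fF_eq_MInfty by blast
  thus ?thesis by simp
next
  case False
  have "continuous (at \<gamma> within {0..}) (fF F)" if "\<gamma> \<ge> 0" for \<gamma>
  proof (cases "\<gamma> = 0")
    case True
    thus ?thesis using fF_tendsto_fF_0[OF assms]
      by (simp add: continuous_within at_within_Ici_at_right)
  next
    case False
    with that have "\<gamma> \<in> {0<..}" by simp
    hence "isCont (fF F) \<gamma>"
      using continuous_on_fF_pos[OF \<open>F \<inter> {0..} \<noteq> {}\<close>]
        continuous_on_eq_continuous_at[OF open_greaterThan]
      by blast
    thus ?thesis by (rule continuous_at_imp_continuous_within)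
  qed
  thus ?thesis unfolding continuous_on_eq_continuous_within atLeast_iff by blast
qed

theorem proposition6:
  fixes F :: "real set"
  assumes "closed F"
  shows "(F \<subseteq> {..<0} \<longrightarrow> (\<forall>\<gamma>\<ge>0. fF F \<gamma> = -\<infinity>))
    \<and> (F \<inter> {0..} \<noteq> {} \<longrightarrow>
         (\<forall>\<gamma>>0. \<bar>fF F \<gamma>\<bar> \<noteq> \<infinity>)
       \<and> continuous_on {0<..} (fF F)
       \<and> (fF F \<longlongrightarrow> fF F 0) (at_right 0)
       \<and> fF F 0 = (if 0 \<in> F then 0 else -\<infinity>))
    \<and> (\<forall>a b :: real. a \<le> b \<and> b \<le> 0 \<longrightarrow>
         closed {\<gamma> \<in> {0..}. fF F \<gamma> \<in> {ereal a..ereal b}})"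
proof (intro conjI impI allI)
  show "fF F \<gamma> = -\<infinity>" if "F \<subseteq> {..<0}" for \<gamma>
    using that by (intro fF_eq_MInfty) auto
next
  assume F: "F \<inter> {0..} \<noteq> {}"
  show "\<bar>fF F \<gamma>\<bar> \<noteq> \<infinity>" if "\<gamma> > 0" for \<gamma>
    unfolding fF_eq_ell_env[OF F that] by simp
  show "continuous_on {0<..} (fF F)" using F by (rule continuous_on_fF_pos)
  show "(fF F \<longlongrightarrow> fF F 0) (at_right 0)" using assms by (rule fF_tendsto_fF_0)
  show "fF F 0 = (if 0 \<in> F then 0 else -\<infinity>)" by (rule fF_at_0)
next
  fix a b :: real
  have "{\<gamma> \<in> {0..}. fF F \<gamma> \<in> {ereal a..ereal b}} = {0..} \<inter> fF F -` {ereal a..ereal b}"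
    by blast
  also have "closed \<dots>"
    using continuous_on_fF_nonneg[OF assms] by (rule continuous_closed_preimage) auto
  finally show "closed {\<gamma> \<in> {0..}. fF F \<gamma> \<in> {ereal a..ereal b}}" .
qed

end
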